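(* Let $X$ be a Banach space with a Schauder basis $(e_i)_i$ for which there are constants $C_1,C_2>0$ such that (i) $\|\sum_{i=1}^ne_i\|\le C_1$ for all $n\in\mathbb{N}$, and (ii) $\|\sum_{i=1}^na_ib_ie_i\|\le C_2\|\sum_{i=1}^na_ie_i\|\|\sum_{i=1}^nb_ie_i\|$ for all scalars $(a_i)_{i=1}^n$, $(b_i)_{i=1}^n$. Let $Y=\overline{\mathrm{span}}\{e_i^*:i\in\mathbb{N}\}\subset X^*$. Then $\mathbb{R}I\oplus\mathcal{K}_\mathrm{diag}(Y)$ is isomorphic as a Banach algebra to the unitization $\mathbb{R}e_\omega\oplus X$ of $X$ via the map sending $I\mapsto e_\omega$ and $e_i^{**}\otimes e_i^*\mapsto e_i$ for all $i\in\mathbb{N}$.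
   Context: $(e_i^* )$ are the biorthogonal functionals of $(e_i)$, which form a basic sequence and hence a Schauder basis of $Y$; $(e_i^{**})\subset Y^*$ are the biorthogonal functionals of $(e_i^* )$ in $Y$, and $e_i^{**}\otimes e_i^*$ is the operator $y\mapsto e_i^{**}(y)e_i^*$ on $Y$. An operator $T$ on $Y$ is diagonal if $e_j^{**}(Te_i^* )=0$ for $i\ne j$; $\mathcal{K}_\mathrm{diag}(Y)$ are the compact diagonal operators and $\mathbb{R}I\oplus\mathcal{K}_\mathrm{diag}(Y)$ the unital Banach algebra of operators $\lambda I+K$. $X$ is an algebra under coordinate-wise multiplication $(\sum a_ie_i)(\sum b_ie_i)=\sum a_ib_ie_i$, and $\mathbb{R}e_\omega\oplus X$ is its unitization with $(\lambda e_\omega+x)(\mu e_\omega+y)=\lambda\mu e_\omega+\lambda y+\mu x+xy$. *)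

theory Defs
  imports "HOL-Analysis.Analysis"
begin

definition schauder_basis :: "(nat \<Rightarrow> 'a::banach) \<Rightarrow> bool" where
  "schauder_basis e \<longleftrightarrow>
     (\<forall>x. \<exists>!a::nat \<Rightarrow> real. (\<lambda>n. \<Sum>i<n. a i *\<^sub>R e i) \<longlonglongrightarrow> x)"

text \<open>Coordinate functional values: coef e i x = e_i^*(x).\<close>
definition coef :: "(nat \<Rightarrow> 'a::banach) \<Rightarrow> nat \<Rightarrow> 'a \<Rightarrow> real" where
  "coef e i x = (THE a::nat \<Rightarrow> real. (\<lambda>n. \<Sum>j<n. a j *\<^sub>R e j) \<longlonglongrightarrow> x) i"

definition estar :: "(nat \<Rightarrow> 'a::banach) \<Rightarrow> nat \<Rightarrow> ('a \<Rightarrow>\<^sub>L real)" where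
  "estar e i = Blinfun (coef e i)"

definition Yspace :: "(nat \<Rightarrow> 'a::banach) \<Rightarrow> ('a \<Rightarrow>\<^sub>L real) set" where
  "Yspace e = closure (span (range (estar e)))"

text \<open>Biorthogonal functionals e_i^** of (e_i^*) in Y: evaluation at e_i.\<close>
definition ebb :: "(nat \<Rightarrow> 'a::banach) \<Rightarrow> nat \<Rightarrow> ('a \<Rightarrow>\<^sub>L real) \<Rightarrow> real" where
  "ebb e i y = blinfun_apply y (e i)"

text \<open>Bounded linear operators on Y, represented as functions that vanish outside Y.\<close>
definition bops :: "(nat \<Rightarrow> 'a::banach) \<Rightarrow> (('a \<Rightarrow>\<^sub>L real) \<Rightarrow> ('a \<Rightarrow>\<^sub>L real)) set" where
  "bops e = {T. (\<forall>y\<in>Yspace e. T y \<in> Yspace e)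
     \<and> (\<forall>y\<in>Yspace e. \<forall>z\<in>Yspace e. T (y + z) = T y + T z)
     \<and> (\<forall>c. \<forall>y\<in>Yspace e. T (c *\<^sub>R y) = c *\<^sub>R T y)
     \<and> (\<exists>K. \<forall>y\<in>Yspace e. norm (T y) \<le> K * norm y)
     \<and> (\<forall>y. y \<notin> Yspace e \<longrightarrow> T y = 0)}"

definition idY :: "(nat \<Rightarrow> 'a::banach) \<Rightarrow> ('a \<Rightarrow>\<^sub>L real) \<Rightarrow> ('a \<Rightarrow>\<^sub>L real)" where
  "idY e y = (if y \<in> Yspace e then y else 0)"

definition rank1 :: "(nat \<Rightarrow> 'a::banach) \<Rightarrow> nat \<Rightarrow> ('a \<Rightarrow>\<^sub>L real) \<Rightarrow> ('a \<Rightarrow>\<^sub>L real)" where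
  "rank1 e i y = (if y \<in> Yspace e then ebb e i y *\<^sub>R estar e i else 0)"

definition Kdiag :: "(nat \<Rightarrow> 'a::banach) \<Rightarrow> (('a \<Rightarrow>\<^sub>L real) \<Rightarrow> ('a \<Rightarrow>\<^sub>L real)) set" where
  "Kdiag e = {T \<in> bops e.
     compact (closure (T ` (Yspace e \<inter> cball 0 1)))
     \<and> (\<forall>i j. i \<noteq> j \<longrightarrow> ebb e j (T (estar e i)) = 0)}"

definition diag_alg :: "(nat \<Rightarrow> 'a::banach) \<Rightarrow> (('a \<Rightarrow>\<^sub>L real) \<Rightarrow> ('a \<Rightarrow>\<^sub>L real)) set" where
  "diag_alg e = {(\<lambda>y. c *\<^sub>R idY e y + K y) | c K. K \<in> Kdiag e}"

definition xmul :: "(nat \<Rightarrow> 'a::banach) \<Rightarrow> 'a \<Rightarrow> 'a \<Rightarrow> 'a" where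
  "xmul e x y = (THE z. \<forall>i. coef e i z = coef e i x * coef e i y)"

text \<open>Unitization R e_omega + X as real \<times> 'a, with norm |lambda| + norm x.\<close>
definition umul :: "(nat \<Rightarrow> 'a::banach) \<Rightarrow> real \<times> 'a \<Rightarrow> real \<times> 'a \<Rightarrow> real \<times> 'a" where
  "umul e u v = (fst u * fst v,
      fst u *\<^sub>R snd v + fst v *\<^sub>R snd u + xmul e (snd u) (snd v))"

definition unorm :: "real \<times> 'a::banach \<Rightarrow> real" where
  "unorm u = \<bar>fst u\<bar> + norm (snd u)"

end

theory Submission
  imports Defs
begin

(* Condition (ii) makes X a Banach algebra under coordinatewise multiplication, with uniformly
   bounded basis projections and coordinate functionals; together with (i) it forces the
   coordinates of every x to tend to 0. The isomorphism sends (c, x) to c I + D_x, where D_x is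
   the restriction to Y of the adjoint of multiplication by x: D_x is diagonal with D_x e_i^* =
   x_i e_i^*, and it is compact as the norm limit of the finite rank operators D_(P_m x). The
   functionals of Y norm the finite sections of X up to the basis constant (finite-dimensional
   Hahn-Banach), which gives the lower norm estimate. Conversely a compact diagonal K has
   eigenvalues l_i with K e_i^* = l_i e_i^*; compactness of K applied to norming functionals of
   the differences of the partial sums of (l_i e_i) shows that these partial sums are Cauchy, so
   they converge to some x with K = D_x. *)

lemma subspace_closure:
  fixes S :: "'b::real_normed_vector set"
  assumes "subspace S"
  shows "subspace (closure S)"
proof -
  have add: "(\<lambda>p. fst p + snd p) ` closure (S \<times> S) \<subseteq> closure S"
    by (rule image_closure_subset)
      (auto intro!: continuous_intros subspace_add[OF assms] closure_subset[THEN subsetD])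
  have scale: "(\<lambda>y. c *\<^sub>R y) ` closure S \<subseteq> closure S" for c
    by (rule image_closure_subset)
      (auto intro: continuous_intros subspace_mul[OF assms] closure_subset[THEN subsetD])
  show ?thesis
    unfolding subspace_def
  proof (intro conjI ballI allI)
    show "0 \<in> closure S" using subspace_0[OF assms] closure_subset by blast
  next
    fix x y assume "x \<in> closure S" "y \<in> closure S"
    then have "(x, y) \<in> closure (S \<times> S)" by (simp add: closure_Times)
    then have "(\<lambda>p. fst p + snd p) (x, y) \<in> closure S" using add by blast
    then show "x + y \<in> closure S" by simp
  next
    fix c x assume "x \<in> closure S"
    then show "c *\<^sub>R x \<in> closure S" using scale by blast
  qed
qed

lemma norm_le_onorm_if_bounded:
  assumes "\<And>y. norm (T y) \<le> B * norm y"
  shows "norm (T y) \<le> onorm T * norm y"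
proof (cases "y = 0")
  case True
  then show ?thesis using assms[of 0] by simp
next
  case False
  have "norm (T z) / norm z \<le> \<bar>B\<bar>" for z
    using assms[of z] abs_ge_self[of B]
    by (cases "z = 0") (auto simp: divide_le_eq intro: order_trans mult_right_mono)
  then have "bdd_above (range (\<lambda>z. norm (T z) / norm z))"
    by (rule bdd_aboveI2)
  then have "norm (T y) / norm y \<le> onorm T"
    unfolding onorm_def by (rule cSUP_upper[rotated]) simp
  then show ?thesis using False by (simp add: divide_le_eq)
qed

lemma Cauchy_if_dist_dominated:
  fixes f :: "nat \<Rightarrow> 'b::metric_space" and g :: "nat \<Rightarrow> 'c::metric_space"
  assumes "Cauchy f" and dominated: "\<And>m n. dist (g m) (g n) \<le> B * dist (f m) (f n)"
  shows "Cauchy g"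
proof (rule metric_CauchyI)
  fix \<epsilon> :: real assume "\<epsilon> > 0"
  then obtain M where M: "\<forall>m\<ge>M. \<forall>n\<ge>M. dist (f m) (f n) < \<epsilon> / (\<bar>B\<bar> + 1)"
    using metric_CauchyD[OF \<open>Cauchy f\<close>, of "\<epsilon> / (\<bar>B\<bar> + 1)"] by auto
  have "dist (g m) (g n) < \<epsilon>" if "m \<ge> M" "n \<ge> M" for m n
  proof -
    have "dist (g m) (g n) \<le> (\<bar>B\<bar> + 1) * dist (f m) (f n)"
      using dominated[of m n] by (smt (verit) mult_right_mono zero_le_dist)
    also have "\<dots> < (\<bar>B\<bar> + 1) * (\<epsilon> / (\<bar>B\<bar> + 1))"
      using M that by (intro mult_strict_left_mono) auto
    finally show ?thesis by simp
  qed
  then show "\<exists>M. \<forall>m\<ge>M. \<forall>n\<ge>M. dist (g m) (g n) < \<epsilon>" by blast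
qed

lemma compact_closure_if_approximable:
  fixes A :: "'b::complete_space set"
  assumes "\<And>\<epsilon>. \<epsilon> > 0 \<Longrightarrow> \<exists>C. compact C \<and> (\<forall>a\<in>A. \<exists>c\<in>C. dist a c < \<epsilon>)"
  shows "compact (closure A)"
proof -
  have "\<exists>k. finite k \<and> closure A \<subseteq> (\<Union>x\<in>k. ball x \<epsilon>)" if "\<epsilon> > 0" for \<epsilon>
  proof -
    have \<delta>: "\<epsilon> / 3 > 0" using that by simp
    obtain C where C: "compact C" "\<forall>a\<in>A. \<exists>c\<in>C. dist a c < \<epsilon> / 3"
      using assms[OF \<delta>] by blast
    obtain k where k: "finite k" "C \<subseteq> (\<Union>x\<in>k. ball x (\<epsilon> / 3))"
      using C(1) \<delta> unfolding compact_eq_totally_bounded by blast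
    have "z \<in> (\<Union>x\<in>k. ball x \<epsilon>)" if "z \<in> closure A" for z
    proof -
      obtain a where a: "a \<in> A" "dist a z < \<epsilon> / 3"
        using \<open>z \<in> closure A\<close> \<delta> unfolding closure_approachable by blast
      obtain c where c: "c \<in> C" "dist a c < \<epsilon> / 3" using C(2) a(1) by blast
      obtain x where x: "x \<in> k" "dist x c < \<epsilon> / 3" using k(2) c(1) by auto
      have "dist x z < \<epsilon>"
        using dist_triangle[of x z c] dist_triangle[of c z a] a(2) c(2) x(2)
        by (simp add: dist_commute)
      then show ?thesis using x(1) by auto
    qed
    then show ?thesis using k(1) by blast
  qed
  then show ?thesis unfolding compact_eq_totally_bounded by (simp add: complete_eq_closed)
qed

definition box_combinations :: "(nat \<Rightarrow> 'b::real_vector) \<Rightarrow> real \<Rightarrow> nat \<Rightarrow> 'b set" where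
  "box_combinations v B m = {\<Sum>i<m. t i *\<^sub>R v i | t. \<forall>i<m. \<bar>t i\<bar> \<le> B}"

lemma box_combinations_Suc:
  "box_combinations v B (Suc m) =
     (\<lambda>p. fst p + snd p *\<^sub>R v m) ` (box_combinations v B m \<times> {-B..B})"
proof
  show "box_combinations v B (Suc m) \<subseteq> (\<lambda>p. fst p + snd p *\<^sub>R v m) ` (box_combinations v B m \<times> {-B..B})"
  proof
    fix z assume "z \<in> box_combinations v B (Suc m)"
    then obtain t where t: "z = (\<Sum>i<Suc m. t i *\<^sub>R v i)" "\<forall>i<Suc m. \<bar>t i\<bar> \<le> B"
      unfolding box_combinations_def by blast
    then have "((\<Sum>i<m. t i *\<^sub>R v i), t m) \<in> box_combinations v B m \<times> {-B..B}"
      unfolding box_combinations_def by auto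
    then show "z \<in> (\<lambda>p. fst p + snd p *\<^sub>R v m) ` (box_combinations v B m \<times> {-B..B})"
      using t(1) by force
  qed
next
  show "(\<lambda>p. fst p + snd p *\<^sub>R v m) ` (box_combinations v B m \<times> {-B..B}) \<subseteq> box_combinations v B (Suc m)"
  proof
    fix z assume "z \<in> (\<lambda>p. fst p + snd p *\<^sub>R v m) ` (box_combinations v B m \<times> {-B..B})"
    then obtain s r where z: "z = (\<Sum>i<m. s i *\<^sub>R v i) + r *\<^sub>R v m"
      and s: "\<forall>i<m. \<bar>s i\<bar> \<le> B" and r: "\<bar>r\<bar> \<le> B"
      unfolding box_combinations_def by auto
    have "(\<Sum>i<m. (s(m := r)) i *\<^sub>R v i) = (\<Sum>i<m. s i *\<^sub>R v i)"
      by (rule sum.cong) auto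
    then have "z = (\<Sum>i<Suc m. (s(m := r)) i *\<^sub>R v i)" using z by simp
    moreover have "\<forall>i<Suc m. \<bar>(s(m := r)) i\<bar> \<le> B" using s r by (simp add: less_Suc_eq)
    ultimately show "z \<in> box_combinations v B (Suc m)" unfolding box_combinations_def by blast
  qed
qed

lemma compact_box_combinations:
  fixes v :: "nat \<Rightarrow> 'b::real_normed_vector"
  shows "compact (box_combinations v B m)"
proof (induction m)
  case 0
  then show ?case by (simp add: box_combinations_def)
next
  case (Suc m)
  then have "compact (box_combinations v B m \<times> {-B..B})" by (intro compact_Times) auto
  then show ?case
    unfolding box_combinations_Suc by (intro compact_continuous_image continuous_intros)
qed

lemma box_combinations_memI:
  "(\<And>i. i < m \<Longrightarrow> \<bar>t i\<bar> \<le> B) \<Longrightarrow> (\<Sum>i<m. t i *\<^sub>R v i) \<in> box_combinations v B m"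
  unfolding box_combinations_def by blast

section \<open>Norming functionals on finite-dimensional subspaces\<close>

definition norm_dominated_on :: "'b::real_normed_vector set \<Rightarrow> ('b \<Rightarrow> real) \<Rightarrow> bool" where
  "norm_dominated_on W f \<longleftrightarrow>
     (\<forall>x\<in>W. \<forall>y\<in>W. f (x + y) = f x + f y) \<and> (\<forall>c. \<forall>x\<in>W. f (c *\<^sub>R x) = c * f x)
     \<and> (\<forall>x\<in>W. f x \<le> norm x)"

lemma
  assumes "norm_dominated_on W f"
  shows norm_dominated_on_add: "x \<in> W \<Longrightarrow> y \<in> W \<Longrightarrow> f (x + y) = f x + f y"
    and norm_dominated_on_scaleR: "x \<in> W \<Longrightarrow> f (c *\<^sub>R x) = c * f x"
    and norm_dominated_on_le: "x \<in> W \<Longrightarrow> f x \<le> norm x"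
  using assms unfolding norm_dominated_on_def by blast+

lemma norm_dominated_on_abs_le:
  assumes "norm_dominated_on W f" "subspace W" "x \<in> W"
  shows "\<bar>f x\<bar> \<le> norm x"
  using norm_dominated_on_scaleR[OF assms(1,3), of "-1"]
    norm_dominated_on_le[OF assms(1) subspace_mul[OF assms(2,3), of "-1"]]
    norm_dominated_on_le[OF assms(1,3)]
  by simp

lemma norm_dominated_on_sum:
  assumes f: "norm_dominated_on W f" and W: "subspace W" and "finite I"
    and mem: "\<And>i. i \<in> I \<Longrightarrow> x i \<in> W"
  shows "f (\<Sum>i\<in>I. c i *\<^sub>R x i) = (\<Sum>i\<in>I. c i * f (x i))"
  using \<open>finite I\<close> mem
proof (induction I rule: finite_induct)
  case empty
  then show ?case using norm_dominated_on_scaleR[OF f subspace_0[OF W], of 0] by simp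
next
  case (insert a I)
  have "c a *\<^sub>R x a \<in> W" "(\<Sum>i\<in>I. c i *\<^sub>R x i) \<in> W"
    using insert.prems by (auto intro: subspace_mul[OF W] subspace_sum[OF W])
  then show ?case
    using insert norm_dominated_on_add[OF f] norm_dominated_on_scaleR[OF f] by simp
qed

lemma dominated_extension_constant:
  assumes W: "subspace W" and f: "norm_dominated_on W f"
  obtains c where "\<And>w. w \<in> W \<Longrightarrow> f w - norm (w - v) \<le> c"
    and "\<And>w. w \<in> W \<Longrightarrow> c \<le> norm (w + v) - f w"
proof -
  have key: "f w1 - norm (w1 - v) \<le> norm (w2 + v) - f w2" if "w1 \<in> W" "w2 \<in> W" for w1 w2
  proof -
    have "f w1 + f w2 = f (w1 + w2)" using norm_dominated_on_add[OF f that] by simp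
    also have "\<dots> \<le> norm ((w1 - v) + (w2 + v))"
      using norm_dominated_on_le[OF f subspace_add[OF W that]] by simp
    also have "\<dots> \<le> norm (w1 - v) + norm (w2 + v)" by (rule norm_triangle_ineq)
    finally show ?thesis by simp
  qed
  define A where "A = (\<lambda>w. f w - norm (w - v)) ` W"
  have "A \<noteq> {}" unfolding A_def using subspace_0[OF W] by blast
  moreover have "bdd_above A"
    unfolding A_def using key[OF _ subspace_0[OF W]]
    by (intro bdd_aboveI2[where M="norm v - f 0"]) simp
  ultimately show ?thesis
    using key by (intro that[of "Sup A"] cSup_upper cSup_least) (auto simp: A_def)
qed

lemma dominated_extension_bound:
  assumes W: "subspace W" and f: "norm_dominated_on W f" and w: "w \<in> W"
    and lo: "\<And>w. w \<in> W \<Longrightarrow> f w - norm (w - v) \<le> c"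
    and hi: "\<And>w. w \<in> W \<Longrightarrow> c \<le> norm (w + v) - f w"
  shows "f w + t * c \<le> norm (w + t *\<^sub>R v)"
proof -
  consider "t > 0" | "t = 0" | "t < 0" by linarith
  then show ?thesis
  proof cases
    case 1
    have "t * c \<le> t * (norm ((1 / t) *\<^sub>R w + v) - f ((1 / t) *\<^sub>R w))"
      using 1 hi[OF subspace_mul[OF W w]] by (simp add: mult_left_mono)
    also have "\<dots> = norm (t *\<^sub>R ((1 / t) *\<^sub>R w + v)) - f w"
      using 1 norm_dominated_on_scaleR[OF f w] by (simp add: right_diff_distrib)
    also have "t *\<^sub>R ((1 / t) *\<^sub>R w + v) = w + t *\<^sub>R v" using 1 by (simp add: scaleR_add_right)
    finally show ?thesis by simp
  next
    case 2
    then show ?thesis using norm_dominated_on_le[OF f w] by simp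
  next
    case 3
    then obtain s where s: "s > 0" "t = - s" by (metis neg_0_less_iff_less minus_minus)
    have "s * (f ((1 / s) *\<^sub>R w) - norm ((1 / s) *\<^sub>R w - v)) \<le> s * c"
      using s lo[OF subspace_mul[OF W w, of "1 / s"]] by (intro mult_left_mono) auto
    then have "s * f ((1 / s) *\<^sub>R w) - s * norm ((1 / s) *\<^sub>R w - v) \<le> s * c"
      by (simp add: right_diff_distrib)
    moreover have "s * f ((1 / s) *\<^sub>R w) = f w"
      using s norm_dominated_on_scaleR[OF f w, of "1 / s"] by simp
    moreover have "s *\<^sub>R ((1 / s) *\<^sub>R w - v) = w + t *\<^sub>R v"
      using s by (simp add: scaleR_diff_right)
    then have "s * norm ((1 / s) *\<^sub>R w - v) = norm (w + t *\<^sub>R v)"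
      using s by (metis abs_of_pos norm_scaleR)
    ultimately show ?thesis using s by simp
  qed
qed

lemma dominated_extension_insert:
  assumes W: "subspace W" and f: "norm_dominated_on W f"
  obtains g where "norm_dominated_on (span (insert v W)) g" and "\<And>x. x \<in> W \<Longrightarrow> g x = f x"
proof (cases "v \<in> W")
  case True
  then have "span (insert v W) = W"
    using W span_redundant[of v W] by (simp add: span_eq_iff[THEN iffD2])
  then show ?thesis using that[of f] f by simp
next
  case False
  obtain c where lo: "\<And>w. w \<in> W \<Longrightarrow> f w - norm (w - v) \<le> c"
    and hi: "\<And>w. w \<in> W \<Longrightarrow> c \<le> norm (w + v) - f w"
    using dominated_extension_constant[OF W f] by blast
  have coeff_unique: "s = t" if "z - s *\<^sub>R v \<in> W" "z - t *\<^sub>R v \<in> W" for z s t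
  proof (rule ccontr)
    assume "s \<noteq> t"
    have "(t - s) *\<^sub>R v = (z - s *\<^sub>R v) - (z - t *\<^sub>R v)" by (simp add: algebra_simps)
    then have "(1 / (t - s)) *\<^sub>R ((t - s) *\<^sub>R v) \<in> W"
      using subspace_diff[OF W that] by (metis subspace_mul[OF W])
    then show False using \<open>s \<noteq> t\<close> False by simp
  qed
  define coeff where "coeff z = (THE t. z - t *\<^sub>R v \<in> W)" for z
  have coeff_eq: "coeff z = t" if "z - t *\<^sub>R v \<in> W" for z t
    unfolding coeff_def using that coeff_unique by blast
  have span_eq: "span (insert v W) = {z. \<exists>t. z - t *\<^sub>R v \<in> W}"
    using span_insert[of v W] span_eq_iff[THEN iffD2, OF W] by simp
  have coeff_mem: "z - coeff z *\<^sub>R v \<in> W" if "z \<in> span (insert v W)" for z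
    using that coeff_eq unfolding span_eq by auto
  define g where "g z = f (z - coeff z *\<^sub>R v) + coeff z * c" for z
  show ?thesis
  proof (rule that)
    show "g x = f x" if "x \<in> W" for x
      using that coeff_eq[of x 0] by (simp add: g_def)
    have "g (x + y) = g x + g y" if "x \<in> span (insert v W)" "y \<in> span (insert v W)" for x y
    proof -
      have eq: "(x + y) - (coeff x + coeff y) *\<^sub>R v = (x - coeff x *\<^sub>R v) + (y - coeff y *\<^sub>R v)"
        by (simp add: algebra_simps)
      have "coeff (x + y) = coeff x + coeff y"
        by (rule coeff_eq) (simp only: eq subspace_add[OF W coeff_mem[OF that(1)] coeff_mem[OF that(2)]])
      then show ?thesis
        using norm_dominated_on_add[OF f coeff_mem[OF that(1)] coeff_mem[OF that(2)]] eq
        by (simp add: g_def algebra_simps)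
    qed
    moreover have "g (a *\<^sub>R x) = a * g x" if "x \<in> span (insert v W)" for a x
    proof -
      have eq: "a *\<^sub>R x - (a * coeff x) *\<^sub>R v = a *\<^sub>R (x - coeff x *\<^sub>R v)"
        by (simp add: algebra_simps)
      have "coeff (a *\<^sub>R x) = a * coeff x"
        by (rule coeff_eq) (simp only: eq subspace_mul[OF W coeff_mem[OF that]])
      then show ?thesis
        using norm_dominated_on_scaleR[OF f coeff_mem[OF that]] eq by (simp add: g_def algebra_simps)
    qed
    moreover have "g z \<le> norm z" if "z \<in> span (insert v W)" for z
      using dominated_extension_bound[OF W f coeff_mem[OF that] lo hi, of "coeff z"]
      by (simp add: g_def)
    ultimately show "norm_dominated_on (span (insert v W)) g"
      unfolding norm_dominated_on_def by blast
  qed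
qed

lemma dominated_extension_finite:
  assumes "finite F" and W: "subspace W" and f: "norm_dominated_on W f"
  obtains g where "norm_dominated_on (span (W \<union> F)) g" and "\<And>x. x \<in> W \<Longrightarrow> g x = f x"
  using \<open>finite F\<close> that
proof (induction F arbitrary: thesis rule: finite_induct)
  case empty
  then show ?case using empty.prems[of f] f by (simp add: span_eq_iff[THEN iffD2, OF W])
next
  case (insert a F)
  obtain g1 where g1: "norm_dominated_on (span (W \<union> F)) g1" "\<And>x. x \<in> W \<Longrightarrow> g1 x = f x"
    using insert.IH by blast
  obtain g2 where g2: "norm_dominated_on (span (insert a (span (W \<union> F)))) g2"
    "\<And>x. x \<in> span (W \<union> F) \<Longrightarrow> g2 x = g1 x"
    using dominated_extension_insert[OF subspace_span g1(1)] by blast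
  have "span (insert a (span (W \<union> F))) = span (W \<union> insert a F)"
    by (simp only: span_insert span_span Un_insert_right)
  moreover have "g2 x = f x" if "x \<in> W" for x
    using that g1(2) g2(2) span_superset[of "W \<union> F"] by auto
  ultimately show ?case using insert.prems g2(1) by auto
qed

lemma norming_functional_on_span:
  fixes v :: "'b::real_normed_vector"
  assumes "finite F"
  shows "\<exists>g. norm_dominated_on (span (insert v F)) g \<and> g v = norm v"
proof -
  have "\<exists>f. norm_dominated_on (span {v}) f \<and> f v = norm v"
  proof (cases "v = 0")
    case True
    then show ?thesis by (intro exI[of _ "\<lambda>_. 0"]) (auto simp: norm_dominated_on_def)
  next
    case False
    define f where "f z = (THE t. z = t *\<^sub>R v) * norm v" for z
    have f_scaleR: "f (t *\<^sub>R v) = t * norm v" for t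
      unfolding f_def using False by (simp add: scaleR_cancel_right)
    have "norm_dominated_on (span {v}) f"
      unfolding norm_dominated_on_def span_singleton
    proof (intro conjI ballI allI)
      fix x y assume "x \<in> range (\<lambda>k. k *\<^sub>R v)" "y \<in> range (\<lambda>k. k *\<^sub>R v)"
      then obtain s t where "x = s *\<^sub>R v" "y = t *\<^sub>R v" by blast
      then show "f (x + y) = f x + f y"
        using f_scaleR[of "s + t"] by (simp add: f_scaleR scaleR_add_left[symmetric] distrib_right
            del: scaleR_add_left)
    next
      fix a x assume "x \<in> range (\<lambda>k. k *\<^sub>R v)"
      then obtain s where "x = s *\<^sub>R v" by blast
      then show "f (a *\<^sub>R x) = a * f x" by (simp add: f_scaleR)
    next
      fix x assume "x \<in> range (\<lambda>k. k *\<^sub>R v)"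
      then obtain s where "x = s *\<^sub>R v" by blast
      then show "f x \<le> norm x" by (simp add: f_scaleR mult_right_mono)
    qed
    then show ?thesis using f_scaleR[of 1] by auto
  qed
  then obtain f where f: "norm_dominated_on (span {v}) f" "f v = norm v" by blast
  obtain g where g: "norm_dominated_on (span (span {v} \<union> F)) g" "\<And>x. x \<in> span {v} \<Longrightarrow> g x = f x"
    using dominated_extension_finite[OF assms subspace_span f(1)] by blast
  have "span (span {v} \<union> F) = span ({v} \<union> F)"
    by (simp only: span_Un span_span)
  then have span_eq: "span (span {v} \<union> F) = span (insert v F)" by simp
  show ?thesis
  proof (intro exI conjI)
    show "norm_dominated_on (span (insert v F)) g" using g(1) unfolding span_eq .
    show "g v = norm v" using g(2)[OF span_base[of v "{v}"]] f(2) by simp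
  qed
qed

section \<open>Bases with bounded sums and a multiplicative estimate\<close>

locale multiplicative_basis =
  fixes e :: "nat \<Rightarrow> 'a::banach" and C1 C2 :: real
  assumes basis: "schauder_basis e"
    and C1_pos: "C1 > 0" and C1_bound: "\<And>n. norm (\<Sum>i<n. e i) \<le> C1"
    and C2_pos: "C2 > 0" and C2_bound: "\<And>n a b.
        norm (\<Sum>i<n. (a i * b i) *\<^sub>R e i)
          \<le> C2 * norm (\<Sum>i<n. a i *\<^sub>R e i) * norm (\<Sum>i<n. b i *\<^sub>R e i)"
begin

definition proj :: "nat \<Rightarrow> 'a \<Rightarrow> 'a" where
  "proj n x = (\<Sum>i<n. coef e i x *\<^sub>R e i)"

definition sum_basis :: "nat \<Rightarrow> 'a" where
  "sum_basis n = (\<Sum>i<n. e i)"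

lemma basis_expansion_unique: "\<exists>!a. (\<lambda>n. \<Sum>i<n. a i *\<^sub>R e i) \<longlonglongrightarrow> x"
  using basis unfolding schauder_basis_def by blast

lemma proj_tendsto: "(\<lambda>n. proj n x) \<longlonglongrightarrow> x"
  using theI'[OF basis_expansion_unique[of x]] unfolding proj_def coef_def by simp

lemma coef_unique:
  assumes "(\<lambda>n. \<Sum>i<n. a i *\<^sub>R e i) \<longlonglongrightarrow> x"
  shows "coef e i x = a i"
proof -
  have "(THE a. (\<lambda>n. \<Sum>j<n. a j *\<^sub>R e j) \<longlonglongrightarrow> x) = a"
    by (rule the1_equality[OF basis_expansion_unique]) (use assms in simp)
  then show ?thesis unfolding coef_def by simp
qed

lemma eq_if_coef_eq:
  assumes "\<And>i. coef e i x = coef e i y"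
  shows "x = y"
  using proj_tendsto[of x] proj_tendsto[of y] LIMSEQ_unique
  unfolding proj_def assms by blast

lemma coef_add: "coef e i (x + y) = coef e i x + coef e i y"
proof -
  have "(\<lambda>n. \<Sum>i<n. (coef e i x + coef e i y) *\<^sub>R e i) \<longlonglongrightarrow> x + y"
    using tendsto_add[OF proj_tendsto[of x] proj_tendsto[of y]]
    by (simp add: proj_def scaleR_add_left sum.distrib)
  then show ?thesis by (rule coef_unique)
qed

lemma coef_scaleR: "coef e i (c *\<^sub>R x) = c * coef e i x"
proof -
  have "(\<lambda>n. \<Sum>i<n. (c * coef e i x) *\<^sub>R e i) \<longlonglongrightarrow> c *\<^sub>R x"
    using tendsto_scaleR[OF tendsto_const[of c] proj_tendsto[of x]]
    by (simp add: proj_def scaleR_sum_right)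
  then show ?thesis by (rule coef_unique)
qed

lemma coef_zero: "coef e i 0 = 0"
  using coef_scaleR[of i 0 0] by simp

lemma coef_diff: "coef e i (x - y) = coef e i x - coef e i y"
  using coef_add[of i x "(-1) *\<^sub>R y"] coef_scaleR[of i "-1" y] by simp

lemma coef_sum: "coef e j (\<Sum>i<n. a i *\<^sub>R e i) = (if j < n then a j else 0)"
proof -
  let ?a = "\<lambda>i. if i < n then a i else 0"
  have "(\<Sum>i<N. ?a i *\<^sub>R e i) = (\<Sum>i<n. a i *\<^sub>R e i)" if "n \<le> N" for N
    using sum.mono_neutral_right[of "{..<N}" "{..<n}" "\<lambda>i. ?a i *\<^sub>R e i"] that by auto
  then have "(\<lambda>N. \<Sum>i<N. ?a i *\<^sub>R e i) \<longlonglongrightarrow> (\<Sum>i<n. a i *\<^sub>R e i)"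
    by (intro tendsto_eventually eventually_sequentiallyI)
  from coef_unique[OF this] show ?thesis by simp
qed

lemma coef_basis: "coef e j (e i) = (if j = i then 1 else 0)"
  using coef_sum[where j=j and n="Suc i" and a="\<lambda>k. if k = i then 1 else 0"]
  by (simp add: if_distrib cong: if_cong)

lemma basis_nonzero: "e i \<noteq> 0"
  using coef_basis[of i i] coef_zero[of i] by auto

lemma coef_proj: "coef e j (proj n x) = (if j < n then coef e j x else 0)"
  unfolding proj_def by (rule coef_sum)

lemma coef_sum_basis: "coef e j (sum_basis n) = (if j < n then 1 else 0)"
  using coef_sum[where j=j and n=n and a="\<lambda>_. 1"] unfolding sum_basis_def by simp

lemma norm_sum_basis_le: "norm (sum_basis n) \<le> C1"
  unfolding sum_basis_def by (rule C1_bound)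

lemma proj_proj: "proj n (proj n x) = proj n x"
  by (rule eq_if_coef_eq) (simp add: coef_proj)

lemma proj_sum: "m \<le> n \<Longrightarrow> proj n (\<Sum>i<m. a i *\<^sub>R e i) = (\<Sum>i<m. a i *\<^sub>R e i)"
  by (rule eq_if_coef_eq) (simp add: coef_proj coef_sum)

lemma proj_sum_basis: "m \<le> n \<Longrightarrow> proj m (sum_basis n) = sum_basis m"
  by (rule eq_if_coef_eq) (auto simp: coef_proj coef_sum_basis)

lemma proj_add: "proj n (x + y) = proj n x + proj n y"
  by (rule eq_if_coef_eq) (simp add: coef_proj coef_add)

lemma proj_scaleR: "proj n (c *\<^sub>R x) = c *\<^sub>R proj n x"
  by (rule eq_if_coef_eq) (simp add: coef_proj coef_scaleR)

lemma proj_diff: "proj n (x - y) = proj n x - proj n y"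
  by (rule eq_if_coef_eq) (simp add: coef_proj coef_diff)

definition proj_bound :: real where
  "proj_bound = C1 * C2"

lemma proj_bound_pos: "proj_bound > 0"
  unfolding proj_bound_def using C1_pos C2_pos by simp

lemma sum_truncate:
  assumes "m \<le> n"
  shows "(\<Sum>j<n. (a j * (if j < m then 1 else 0)) *\<^sub>R e j) = (\<Sum>j<m. a j *\<^sub>R e j)"
  using sum.mono_neutral_right[of "{..<n}" "{..<m}" "\<lambda>j. (a j * (if j < m then 1 else 0)) *\<^sub>R e j"]
    assms by auto

lemma abs_coef_le_norm_sum:
  assumes "i < n"
  shows "\<bar>a i\<bar> \<le> C2 * norm (\<Sum>j<n. a j *\<^sub>R e j)"
proof -
  let ?\<delta> = "\<lambda>j. if j = i then 1 else (0::real)"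
  have single: "(\<Sum>j<n. (b j * ?\<delta> j) *\<^sub>R e j) = b i *\<^sub>R e i" for b
  proof -
    have "(\<Sum>j<n. (b j * ?\<delta> j) *\<^sub>R e j) = (\<Sum>j<n. if j = i then b i *\<^sub>R e i else 0)"
      by (rule sum.cong) auto
    then show ?thesis using assms by simp
  qed
  have "\<bar>a i\<bar> * norm (e i) \<le> C2 * norm (\<Sum>j<n. a j *\<^sub>R e j) * norm (e i)"
    using C2_bound[where n=n and a=a and b="?\<delta>"] single[of a] single[of "\<lambda>_. 1"] by simp
  then show ?thesis using basis_nonzero[of i] by simp
qed

lemma abs_coef_le: "\<bar>coef e i x\<bar> \<le> C2 * norm x"
proof -
  have "\<forall>\<^sub>F n in sequentially. \<bar>coef e i x\<bar> \<le> C2 * norm (proj n x)"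
    using abs_coef_le_norm_sum[where a="\<lambda>j. coef e j x"]
    by (intro eventually_sequentiallyI[of "Suc i"]) (simp add: proj_def)
  moreover have "(\<lambda>n. C2 * norm (proj n x)) \<longlonglongrightarrow> C2 * norm x"
    by (intro tendsto_intros proj_tendsto)
  ultimately show ?thesis by (intro tendsto_le[OF trivial_limit_sequentially _ tendsto_const])
qed

lemma norm_proj_le_norm_proj:
  assumes "m \<le> n"
  shows "norm (proj m z) \<le> proj_bound * norm (proj n z)"
proof -
  have "norm (proj m z) \<le> C2 * norm (proj n z) * norm (sum_basis m)"
    using C2_bound[where n=n and a="\<lambda>j. coef e j z" and b="\<lambda>j. if j < m then 1 else 0"]
      sum_truncate[OF assms, of "\<lambda>j. coef e j z"] sum_truncate[OF assms, of "\<lambda>_. 1"]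
    by (simp add: proj_def sum_basis_def)
  also have "\<dots> \<le> C2 * norm (proj n z) * C1"
    by (intro mult_left_mono norm_sum_basis_le) (use C2_pos in auto)
  finally show ?thesis by (simp add: proj_bound_def mult_ac)
qed

lemma norm_proj_le: "norm (proj m z) \<le> proj_bound * norm z"
proof -
  have "\<forall>\<^sub>F n in sequentially. norm (proj m z) \<le> proj_bound * norm (proj n z)"
    by (intro eventually_sequentiallyI[of m] norm_proj_le_norm_proj)
  moreover have "(\<lambda>n. proj_bound * norm (proj n z)) \<longlonglongrightarrow> proj_bound * norm z"
    by (intro tendsto_intros proj_tendsto)
  ultimately show ?thesis by (intro tendsto_le[OF trivial_limit_sequentially _ tendsto_const])
qed

lemma norm_basis_le: "norm (e i) \<le> 2 * C1"
proof -
  have "e i = sum_basis (Suc i) - sum_basis i" by (simp add: sum_basis_def)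
  then show ?thesis
    using norm_triangle_ineq4[of "sum_basis (Suc i)" "sum_basis i"]
      norm_sum_basis_le[of "Suc i"] norm_sum_basis_le[of i]
    by simp
qed

lemma coef_tendsto_zero: "(\<lambda>i. coef e i x) \<longlonglongrightarrow> 0"
proof -
  have "(\<lambda>i. proj (Suc i) x - proj i x) \<longlonglongrightarrow> 0"
    using tendsto_diff[OF LIMSEQ_Suc[OF proj_tendsto[of x]] proj_tendsto[of x]] by simp
  then have lim: "(\<lambda>i. C2 * norm (proj (Suc i) x - proj i x)) \<longlonglongrightarrow> 0"
    by (intro tendsto_mult_right_zero tendsto_norm_zero)
  have "norm (coef e i x) \<le> C2 * norm (proj (Suc i) x - proj i x)" for i
  proof -
    have "1 \<le> C2 * norm (e i)" using abs_coef_le[of i "e i"] by (simp add: coef_basis)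
    then have "\<bar>coef e i x\<bar> * 1 \<le> \<bar>coef e i x\<bar> * (C2 * norm (e i))"
      by (rule mult_left_mono) simp
    also have "\<dots> = C2 * norm (coef e i x *\<^sub>R e i)"
      by simp
    also have "coef e i x *\<^sub>R e i = proj (Suc i) x - proj i x"
      by (simp add: proj_def)
    finally show ?thesis by simp
  qed
  then show ?thesis
    by (intro Lim_null_comparison[OF always_eventually lim] allI)
qed

lemma bounded_linear_coef: "bounded_linear (coef e i)"
  by (rule bounded_linear_intro[where K=C2])
    (auto simp: coef_add coef_scaleR mult.commute intro: abs_coef_le)

lemma estar_apply [simp]: "blinfun_apply (estar e i) = coef e i"
  unfolding estar_def using bounded_linear_coef by (simp add: bounded_linear_Blinfun_apply)

lemma estar_nonzero: "estar e i \<noteq> 0"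
  using coef_basis[of i i] by (metis estar_apply zero_blinfun.rep_eq zero_neq_one)

definition projL :: "nat \<Rightarrow> 'a \<Rightarrow>\<^sub>L 'a" where
  "projL n = Blinfun (proj n)"

lemma projL_apply [simp]: "blinfun_apply (projL n) = proj n"
proof -
  have "bounded_linear (proj n)"
    by (rule bounded_linear_intro[where K=proj_bound])
      (auto simp: proj_add proj_scaleR mult.commute[of _ proj_bound] intro: norm_proj_le)
  then show ?thesis unfolding projL_def by (simp add: bounded_linear_Blinfun_apply)
qed

lemma norm_projL_le: "norm (projL n) \<le> proj_bound"
  by (rule norm_blinfun_bound) (use proj_bound_pos norm_proj_le in auto)

definition partial_product :: "'a \<Rightarrow> 'a \<Rightarrow> nat \<Rightarrow> 'a" where
  "partial_product x w n = (\<Sum>i<n. (coef e i x * coef e i w) *\<^sub>R e i)"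

lemma norm_partial_product_diff_le:
  assumes "m \<le> n"
  shows "norm (partial_product x w n - partial_product x w m)
    \<le> C2 * proj_bound * norm w * norm (proj n x - proj m x)"
proof -
  let ?a = "\<lambda>i. if m \<le> i then coef e i x else 0"
  have tail_product: "partial_product x w n - partial_product x w m = (\<Sum>i<n. (?a i * coef e i w) *\<^sub>R e i)"
  proof (rule eq_if_coef_eq)
    fix j show "coef e j (partial_product x w n - partial_product x w m) = coef e j (\<Sum>i<n. (?a i * coef e i w) *\<^sub>R e i)"
      using assms by (cases "j < m"; cases "j < n") (simp_all add: partial_product_def coef_diff coef_sum)
  qed
  have tail: "proj n x - proj m x = (\<Sum>i<n. ?a i *\<^sub>R e i)"
  proof (rule eq_if_coef_eq)
    fix j show "coef e j (proj n x - proj m x) = coef e j (\<Sum>i<n. ?a i *\<^sub>R e i)"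
      using assms by (cases "j < m"; cases "j < n") (simp_all add: coef_proj coef_diff coef_sum)
  qed
  have "norm (\<Sum>i<n. (?a i * coef e i w) *\<^sub>R e i)
      \<le> C2 * norm (\<Sum>i<n. ?a i *\<^sub>R e i) * norm (\<Sum>i<n. coef e i w *\<^sub>R e i)"
    by (rule C2_bound)
  then have "norm (partial_product x w n - partial_product x w m)
      \<le> C2 * norm (proj n x - proj m x) * norm (proj n w)"
    unfolding tail_product tail by (simp only: proj_def)
  also have "\<dots> \<le> C2 * norm (proj n x - proj m x) * (proj_bound * norm w)"
    by (intro mult_left_mono norm_proj_le) (use C2_pos in auto)
  finally show ?thesis by (simp add: mult_ac)
qed

lemma Cauchy_partial_product: "Cauchy (partial_product x w)"
proof (rule Cauchy_if_dist_dominated[OF LIMSEQ_imp_Cauchy[OF proj_tendsto[of x]]])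
  fix m n
  show "dist (partial_product x w m) (partial_product x w n)
    \<le> (C2 * proj_bound * norm w) * dist (proj m x) (proj n x)"
    using norm_partial_product_diff_le[of m n x w] norm_partial_product_diff_le[of n m x w]
    by (cases "m \<le> n") (simp_all add: dist_norm norm_minus_commute)
qed

lemma coef_xmul [simp]: "coef e i (xmul e x w) = coef e i x * coef e i w"
proof -
  obtain z where z: "partial_product x w \<longlonglongrightarrow> z"
    using Cauchy_partial_product[of x w] by (auto simp: Cauchy_convergent_iff convergent_def)
  have "\<forall>i. coef e i z = coef e i x * coef e i w"
    using coef_unique[OF z[unfolded partial_product_def]] by simp
  then have "\<exists>!z. \<forall>i. coef e i z = coef e i x * coef e i w"
    using eq_if_coef_eq by (intro ex1I[of _ z]) auto
  then show ?thesis using theI'[of "\<lambda>z. \<forall>i. coef e i z = coef e i x * coef e i w"]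
    unfolding xmul_def by blast
qed

lemma norm_xmul_le: "norm (xmul e x w) \<le> C2 * norm x * norm w"
proof -
  have proj_xmul: "proj n (xmul e x w) = partial_product x w n" for n
    by (rule eq_if_coef_eq) (simp add: coef_proj partial_product_def coef_sum)
  have "\<forall>\<^sub>F n in sequentially. norm (proj n (xmul e x w)) \<le> C2 * norm (proj n x) * norm (proj n w)"
    unfolding proj_xmul unfolding partial_product_def proj_def by (intro always_eventually allI C2_bound)
  moreover have "(\<lambda>n. norm (proj n (xmul e x w))) \<longlonglongrightarrow> norm (xmul e x w)"
    by (intro tendsto_intros proj_tendsto)
  moreover have "(\<lambda>n. C2 * norm (proj n x) * norm (proj n w)) \<longlonglongrightarrow> C2 * norm x * norm w"
    by (intro tendsto_intros proj_tendsto)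
  ultimately show ?thesis by (intro tendsto_le[OF trivial_limit_sequentially]) auto
qed

definition multL :: "'a \<Rightarrow> 'a \<Rightarrow>\<^sub>L 'a" where
  "multL x = Blinfun (xmul e x)"

lemma multL_apply [simp]: "blinfun_apply (multL x) = xmul e x"
proof -
  have "xmul e x (y + z) = xmul e x y + xmul e x z" for y z
    by (rule eq_if_coef_eq) (simp add: coef_add algebra_simps)
  moreover have "xmul e x (c *\<^sub>R y) = c *\<^sub>R xmul e x y" for c y
    by (rule eq_if_coef_eq) (simp add: coef_scaleR)
  moreover have "norm (xmul e x y) \<le> norm y * (C2 * norm x)" for y
    using norm_xmul_le[of x y] by (simp add: mult_ac)
  ultimately have "bounded_linear (xmul e x)"
    by (rule bounded_linear_intro)
  then show ?thesis unfolding multL_def by (simp add: bounded_linear_Blinfun_apply)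
qed

lemma norm_multL_le: "norm (multL x) \<le> C2 * norm x"
  by (rule norm_blinfun_bound) (use C2_pos norm_xmul_le[of x] in \<open>auto simp: mult_ac\<close>)

lemma multL_add: "multL (x + w) = multL x + multL w"
  by (rule blinfun_eqI, rule eq_if_coef_eq) (simp add: blinfun.add_left coef_add algebra_simps)

lemma multL_scaleR: "multL (c *\<^sub>R x) = c *\<^sub>R multL x"
  by (rule blinfun_eqI, rule eq_if_coef_eq) (simp add: blinfun.scaleR_left coef_scaleR)

lemma multL_diff: "multL (x - w) = multL x - multL w"
  by (rule blinfun_eqI, rule eq_if_coef_eq) (simp add: blinfun.diff_left coef_diff algebra_simps)

lemma multL_comp: "multL w o\<^sub>L multL x = multL (xmul e x w)"
  by (rule blinfun_eqI, rule eq_if_coef_eq) (simp add: mult_ac)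

lemma xmul_sum_basis: "xmul e x (sum_basis n) = proj n x"
  by (rule eq_if_coef_eq) (simp add: coef_sum_basis coef_proj)

lemma xmul_proj: "xmul e (proj m x) z = (\<Sum>i<m. (coef e i x * coef e i z) *\<^sub>R e i)"
  by (rule eq_if_coef_eq) (simp add: coef_proj coef_sum)

lemma xmul_basis: "xmul e (e i) z = coef e i z *\<^sub>R e i"
  by (rule eq_if_coef_eq) (simp add: coef_basis coef_scaleR)

abbreviation Y0 :: "('a \<Rightarrow>\<^sub>L real) set" where
  "Y0 \<equiv> span (range (estar e))"

abbreviation Y :: "('a \<Rightarrow>\<^sub>L real) set" where
  "Y \<equiv> Yspace e"

lemma subspace_Y: "subspace Y"
  unfolding Yspace_def by (intro subspace_closure subspace_span)

lemma closed_Y: "closed Y"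
  unfolding Yspace_def by simp

lemma Y0_subset_Y: "y \<in> Y0 \<Longrightarrow> y \<in> Y"
  unfolding Yspace_def using closure_subset by blast

lemma estar_in_Y: "estar e i \<in> Y"
  by (intro Y0_subset_Y span_base) simp

lemma Y_zero: "0 \<in> Y"
  using subspace_0[OF subspace_Y] .

lemma Y_add: "y \<in> Y \<Longrightarrow> z \<in> Y \<Longrightarrow> y + z \<in> Y"
  using subspace_add[OF subspace_Y] .

lemma Y_scaleR: "y \<in> Y \<Longrightarrow> c *\<^sub>R y \<in> Y"
  using subspace_mul[OF subspace_Y] .

lemma Y_diff: "y \<in> Y \<Longrightarrow> z \<in> Y \<Longrightarrow> y - z \<in> Y"
  using subspace_diff[OF subspace_Y] .

lemma comp_projL_eq: "y o\<^sub>L projL N = (\<Sum>j<N. y (e j) *\<^sub>R estar e j)"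
  by (rule blinfun_eqI)
    (simp add: proj_def blinfun.sum_left blinfun.sum_right blinfun.scaleR_left blinfun.scaleR_right mult.commute)

lemma comp_projL_in_Y0: "y o\<^sub>L projL N \<in> Y0"
  unfolding comp_projL_eq by (intro span_sum span_mul span_base) simp

lemma comp_projL_eventually_eq:
  assumes "y \<in> Y0"
  shows "\<forall>\<^sub>F N in sequentially. y o\<^sub>L projL N = y"
  using assms
proof (induction rule: span_induct_alt)
  case base
  then show ?case by simp
next
  case (step c x y)
  then obtain i where i: "x = estar e i" by blast
  have "\<forall>\<^sub>F N in sequentially. x o\<^sub>L projL N = x"
    by (rule eventually_sequentiallyI[of "Suc i"]) (auto intro!: blinfun_eqI simp: i coef_proj)
  with step.IH show ?case
    by eventually_elim (simp add: bounded_bilinear.add_left[OF bounded_bilinear_blinfun_compose]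
        bounded_bilinear.scaleR_left[OF bounded_bilinear_blinfun_compose])
qed

lemma comp_projL_tendsto:
  assumes "y \<in> Y"
  shows "(\<lambda>N. y o\<^sub>L projL N) \<longlonglongrightarrow> y"
proof (unfold tendsto_iff, intro allI impI)
  fix \<epsilon> :: real assume "\<epsilon> > 0"
  define \<delta> where "\<delta> = \<epsilon> / (proj_bound + 2)"
  have \<delta>: "\<delta> > 0" using \<open>\<epsilon> > 0\<close> proj_bound_pos by (simp add: \<delta>_def)
  obtain y' where y': "y' \<in> Y0" "dist y' y < \<delta>"
    using assms \<delta> unfolding Yspace_def closure_approachable by blast
  from comp_projL_eventually_eq[OF y'(1)]
  show "\<forall>\<^sub>F N in sequentially. dist (y o\<^sub>L projL N) y < \<epsilon>"
  proof eventually_elim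
    fix N assume N: "y' o\<^sub>L projL N = y'"
    have "(y o\<^sub>L projL N) - y = ((y - y') o\<^sub>L projL N) + (y' - y)"
      using N by (simp add: bounded_bilinear.diff_left[OF bounded_bilinear_blinfun_compose])
    then have "norm ((y o\<^sub>L projL N) - y) \<le> norm ((y - y') o\<^sub>L projL N) + norm (y' - y)"
      by (simp only: norm_triangle_ineq)
    also have "\<dots> \<le> norm (y - y') * proj_bound + norm (y' - y)"
      by (intro add_right_mono order_trans[OF norm_blinfun_compose] mult_left_mono norm_projL_le) simp
    also have "\<dots> = (proj_bound + 1) * dist y' y"
      by (simp add: dist_norm norm_minus_commute algebra_simps)
    also have "\<dots> < (proj_bound + 1) * \<delta>"
      using y'(2) proj_bound_pos by (intro mult_strict_left_mono) auto
    also have "\<dots> \<le> \<epsilon>"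
      using \<delta> proj_bound_pos by (simp add: \<delta>_def field_simps)
    finally show "dist (y o\<^sub>L projL N) y < \<epsilon>" by (simp add: dist_norm)
  qed
qed

lemma Y_single_coordinate:
  assumes "y \<in> Y" and "\<And>j. j \<noteq> i \<Longrightarrow> y (e j) = 0"
  shows "y = y (e i) *\<^sub>R estar e i"
proof -
  have "y o\<^sub>L projL N = y (e i) *\<^sub>R estar e i" if "Suc i \<le> N" for N
  proof -
    have "(\<Sum>j<N. y (e j) *\<^sub>R estar e j) = (\<Sum>j<N. if j = i then y (e i) *\<^sub>R estar e i else 0)"
      by (rule sum.cong) (auto simp: assms(2))
    then show ?thesis using that by (simp add: comp_projL_eq)
  qed
  then have "(\<lambda>N. y o\<^sub>L projL N) \<longlonglongrightarrow> y (e i) *\<^sub>R estar e i"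
    by (intro tendsto_eventually eventually_sequentiallyI)
  then show ?thesis using LIMSEQ_unique comp_projL_tendsto[OF assms(1)] by blast
qed

lemma estar_comp_multL: "estar e i o\<^sub>L multL x = coef e i x *\<^sub>R estar e i"
  by (rule blinfun_eqI) (simp add: blinfun.scaleR_left)

lemma comp_multL_in_Y:
  assumes "y \<in> Y"
  shows "y o\<^sub>L multL x \<in> Y"
proof -
  let ?L = "\<lambda>y. y o\<^sub>L multL x"
  have bl: "bounded_linear ?L"
    by (rule bounded_bilinear.bounded_linear_left[OF bounded_bilinear_blinfun_compose])
  have "?L ` Y0 = span (?L ` range (estar e))"
    by (rule span_linear_image[OF bounded_linear.linear[OF bl], symmetric])
  also have "\<dots> \<subseteq> Y0"
    by (rule span_minimal) (auto simp: estar_comp_multL subspace_span intro!: span_mul[OF span_base])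
  finally have "?L ` Y0 \<subseteq> closure Y0" using closure_subset by blast
  then have "?L ` closure Y0 \<subseteq> closure Y0"
    by (intro image_closure_subset) (auto intro: linear_continuous_on bl)
  then show ?thesis using assms unfolding Yspace_def by blast
qed

lemma comp_multL_proj:
  "y o\<^sub>L multL (proj m x) = (\<Sum>i<m. y (e i) *\<^sub>R (coef e i x *\<^sub>R estar e i))"
  by (rule blinfun_eqI)
    (simp add: xmul_proj blinfun.sum_right blinfun.scaleR_right blinfun.sum_left blinfun.scaleR_left mult_ac)

lemma norming_functional:
  assumes "proj m v = v"
  shows "\<exists>y\<in>Y. norm y \<le> proj_bound \<and> y o\<^sub>L projL m = y \<and> y v = norm v"
proof -
  define W where "W = span (insert v (e ` {..<m}))"
  obtain g where g: "norm_dominated_on W g" "g v = norm v"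
    using norming_functional_on_span[of "e ` {..<m}" v] unfolding W_def by blast
  have W: "subspace W" unfolding W_def by (rule subspace_span)
  have proj_in_W: "proj m z \<in> W" for z
    unfolding proj_def W_def by (intro span_sum span_mul span_base) auto
  have g_proj: "g (proj m z) = (\<Sum>i<m. coef e i z * g (e i))" for z
    unfolding proj_def by (rule norm_dominated_on_sum[OF g(1) W]) (auto simp: W_def intro: span_base)
  define y where "y = (\<Sum>i<m. g (e i) *\<^sub>R estar e i)"
  have y_apply: "y z = g (proj m z)" for z
    unfolding y_def g_proj by (simp add: blinfun.sum_left blinfun.scaleR_left mult.commute)
  show ?thesis
  proof (intro bexI conjI)
    show "y \<in> Y"
      unfolding y_def by (intro Y0_subset_Y span_sum span_mul span_base) simp
    show "norm y \<le> proj_bound"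
    proof (rule norm_blinfun_bound)
      show "0 \<le> proj_bound" using proj_bound_pos by simp
      fix z
      have "norm (y z) \<le> norm (proj m z)"
        using norm_dominated_on_abs_le[OF g(1) W proj_in_W] by (simp add: y_apply)
      also have "\<dots> \<le> proj_bound * norm z" by (rule norm_proj_le)
      finally show "norm (y z) \<le> proj_bound * norm z" .
    qed
    show "y o\<^sub>L projL m = y" by (rule blinfun_eqI) (simp add: y_apply proj_proj)
    show "y v = norm v" using assms g(2) by (simp add: y_apply)
  qed
qed

subsection \<open>The operators c I + D_x\<close>

definition adj_mult :: "'a \<Rightarrow> ('a \<Rightarrow>\<^sub>L real) \<Rightarrow> ('a \<Rightarrow>\<^sub>L real)" where
  "adj_mult x y = (if y \<in> Y then y o\<^sub>L multL x else 0)"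

definition diag_op :: "real \<times> 'a \<Rightarrow> ('a \<Rightarrow>\<^sub>L real) \<Rightarrow> ('a \<Rightarrow>\<^sub>L real)" where
  "diag_op u y = fst u *\<^sub>R idY e y + adj_mult (snd u) y"

lemma adj_mult_in_bops: "adj_mult x \<in> bops e"
  unfolding bops_def
proof (intro CollectI conjI ballI allI impI)
  show "adj_mult x y \<in> Y" for y by (simp add: adj_mult_def comp_multL_in_Y Y_zero)
  show "adj_mult x (y + z) = adj_mult x y + adj_mult x z" if "y \<in> Y" "z \<in> Y" for y z
    using that by (simp add: adj_mult_def Y_add bounded_bilinear.add_left[OF bounded_bilinear_blinfun_compose])
  show "adj_mult x (c *\<^sub>R y) = c *\<^sub>R adj_mult x y" if "y \<in> Y" for c y
    using that by (simp add: adj_mult_def Y_scaleR bounded_bilinear.scaleR_left[OF bounded_bilinear_blinfun_compose])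
  show "\<exists>K. \<forall>y\<in>Y. norm (adj_mult x y) \<le> K * norm y"
    by (rule exI[of _ "norm (multL x)"]) (simp add: adj_mult_def norm_blinfun_compose mult.commute)
  show "adj_mult x y = 0" if "y \<notin> Y" for y using that by (simp add: adj_mult_def)
qed

lemma compact_adj_mult_image: "compact (closure (adj_mult x ` (Y \<inter> cball 0 1)))"
proof (rule compact_closure_if_approximable)
  fix \<epsilon> :: real assume "\<epsilon> > 0"
  then have "\<forall>\<^sub>F m in sequentially. dist (proj m x) x < \<epsilon> / C2"
    using proj_tendsto[of x] C2_pos unfolding tendsto_iff by simp
  then obtain m where m: "C2 * norm (x - proj m x) < \<epsilon>"
    using C2_pos by (auto simp: eventually_sequentially dist_norm norm_minus_commute field_simps)
  let ?C = "box_combinations (\<lambda>i. coef e i x *\<^sub>R estar e i) (2 * C1) m"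
  show "\<exists>C. compact C \<and> (\<forall>a\<in>adj_mult x ` (Y \<inter> cball 0 1). \<exists>c\<in>C. dist a c < \<epsilon>)"
  proof (intro exI conjI ballI)
    show "compact ?C" by (rule compact_box_combinations)
    fix a assume "a \<in> adj_mult x ` (Y \<inter> cball 0 1)"
    then obtain y where y: "y \<in> Y" "norm y \<le> 1" "a = y o\<^sub>L multL x"
      by (auto simp: adj_mult_def)
    show "\<exists>c\<in>?C. dist a c < \<epsilon>"
    proof
      show "y o\<^sub>L multL (proj m x) \<in> ?C"
        unfolding comp_multL_proj
      proof (rule box_combinations_memI)
        fix i
        have "\<bar>y (e i)\<bar> \<le> norm y * norm (e i)" using norm_blinfun[of y "e i"] by simp
        also have "\<dots> \<le> 1 * (2 * C1)" using y(2) norm_basis_le[of i] by (intro mult_mono) auto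
        finally show "\<bar>y (e i)\<bar> \<le> 2 * C1" by simp
      qed
      have "dist a (y o\<^sub>L multL (proj m x)) = norm (y o\<^sub>L multL (x - proj m x))"
        by (simp add: y(3) dist_norm multL_diff bounded_bilinear.diff_right[OF bounded_bilinear_blinfun_compose])
      also have "\<dots> \<le> norm y * (C2 * norm (x - proj m x))"
        by (rule order_trans[OF norm_blinfun_compose]) (intro mult_left_mono norm_multL_le; simp)
      also have "\<dots> \<le> C2 * norm (x - proj m x)"
        using y(2) C2_pos by (simp add: mult_left_le_one_le)
      finally show "dist a (y o\<^sub>L multL (proj m x)) < \<epsilon>" using m by simp
    qed
  qed
qed

lemma adj_mult_estar: "adj_mult x (estar e i) = coef e i x *\<^sub>R estar e i"
  by (simp add: adj_mult_def estar_in_Y estar_comp_multL)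

lemma adj_mult_in_Kdiag: "adj_mult x \<in> Kdiag e"
  unfolding Kdiag_def
  using adj_mult_in_bops compact_adj_mult_image
  by (simp add: adj_mult_estar ebb_def blinfun.scaleR_left coef_basis)

lemma diag_op_in_diag_alg: "diag_op u \<in> diag_alg e"
  unfolding diag_alg_def diag_op_def using adj_mult_in_Kdiag by blast

lemma diag_op_in_Y: "y \<in> Y \<Longrightarrow> diag_op u y = fst u *\<^sub>R y + (y o\<^sub>L multL (snd u))"
  by (simp add: diag_op_def idY_def adj_mult_def)

lemma diag_op_outside_Y: "y \<notin> Y \<Longrightarrow> diag_op u y = 0"
  by (simp add: diag_op_def idY_def adj_mult_def)

lemma diag_op_estar: "diag_op u (estar e i) = (fst u + coef e i (snd u)) *\<^sub>R estar e i"
  by (simp add: diag_op_in_Y estar_in_Y estar_comp_multL scaleR_add_left)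

lemma diag_op_add: "(\<lambda>y. diag_op u y + diag_op v y) = diag_op (u + v)"
proof
  fix y show "diag_op u y + diag_op v y = diag_op (u + v) y"
    by (cases "y \<in> Y")
      (simp_all add: diag_op_in_Y diag_op_outside_Y multL_add scaleR_add_left algebra_simps
        bounded_bilinear.add_right[OF bounded_bilinear_blinfun_compose])
qed

lemma diag_op_scaleR: "(\<lambda>y. a *\<^sub>R diag_op u y) = diag_op (a *\<^sub>R u)"
proof
  fix y show "a *\<^sub>R diag_op u y = diag_op (a *\<^sub>R u) y"
    by (cases "y \<in> Y")
      (simp_all add: diag_op_in_Y diag_op_outside_Y multL_scaleR scaleR_add_right
        bounded_bilinear.scaleR_right[OF bounded_bilinear_blinfun_compose])
qed

lemma diag_op_comp: "diag_op u \<circ> diag_op v = diag_op (umul e u v)"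
proof
  fix y show "(diag_op u \<circ> diag_op v) y = diag_op (umul e u v) y"
  proof (cases "y \<in> Y")
    case True
    have "diag_op v y \<in> Y"
      using True comp_multL_in_Y by (simp add: diag_op_in_Y Y_add Y_scaleR)
    then show ?thesis
      using True
      by (auto intro!: blinfun_eqI simp: diag_op_in_Y umul_def blinfun.add_left blinfun.scaleR_left
          blinfun.add_right blinfun.scaleR_right multL_comp[symmetric] multL_add multL_scaleR algebra_simps)
  next
    case False
    then show ?thesis by (simp add: diag_op_outside_Y diag_op_in_Y Y_zero)
  qed
qed

lemma diag_op_one: "diag_op (1, 0) = idY e"
  using multL_scaleR[of 0 0] by (intro ext) (simp add: diag_op_def adj_mult_def idY_def)

lemma diag_op_basis: "diag_op (0, e i) = rank1 e i"
proof
  fix y show "diag_op (0, e i) y = rank1 e i y"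
    by (cases "y \<in> Y")
      (auto intro!: blinfun_eqI simp: diag_op_in_Y diag_op_outside_Y rank1_def xmul_basis ebb_def
        blinfun.scaleR_left blinfun.scaleR_right mult.commute)
qed

lemma inj_diag_op: "inj diag_op"
proof (rule injI)
  fix u v assume eq: "diag_op u = diag_op v"
  have coords: "fst u + coef e i (snd u) = fst v + coef e i (snd v)" for i
    using arg_cong[OF eq, of "\<lambda>T. T (estar e i)"] estar_nonzero[of i] by (simp add: diag_op_estar)
  have "(\<lambda>i. fst u + coef e i (snd u)) \<longlonglongrightarrow> fst u"
    using tendsto_add[OF tendsto_const coef_tendsto_zero] by simp
  moreover have "(\<lambda>i. fst u + coef e i (snd u)) \<longlonglongrightarrow> fst v"
    unfolding coords using tendsto_add[OF tendsto_const coef_tendsto_zero] by simp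
  ultimately have "fst u = fst v" by (rule LIMSEQ_unique)
  moreover have "snd u = snd v" using coords calculation by (intro eq_if_coef_eq) simp
  ultimately show "u = v" by (simp add: prod_eq_iff)
qed

lemma norm_diag_op_le: "norm (diag_op u y) \<le> (\<bar>fst u\<bar> + C2 * norm (snd u)) * norm y"
proof (cases "y \<in> Y")
  case True
  have "norm (diag_op u y) \<le> norm (fst u *\<^sub>R y) + norm (y o\<^sub>L multL (snd u))"
    using True by (simp only: diag_op_in_Y norm_triangle_ineq)
  also have "norm (y o\<^sub>L multL (snd u)) \<le> norm y * (C2 * norm (snd u))"
    by (rule order_trans[OF norm_blinfun_compose]) (intro mult_left_mono norm_multL_le, simp)
  finally show ?thesis by (simp add: algebra_simps)
next
  case False
  then show ?thesis using C2_pos by (simp add: diag_op_outside_Y)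
qed

lemma onorm_diag_op_le: "onorm (diag_op u) \<le> max 1 C2 * unorm u"
proof (rule onorm_bound)
  show "0 \<le> max 1 C2 * unorm u" by (simp add: unorm_def)
  have "\<bar>fst u\<bar> + C2 * norm (snd u) \<le> max 1 C2 * unorm u"
    using mult_right_mono[of 1 "max 1 C2" "\<bar>fst u\<bar>"] mult_right_mono[of C2 "max 1 C2" "norm (snd u)"]
    by (simp add: unorm_def distrib_left)
  then show "norm (diag_op u y) \<le> max 1 C2 * unorm u * norm y" for y
    by (rule order_trans[OF norm_diag_op_le mult_right_mono]) simp
qed

lemma norm_diag_op_le_onorm: "norm (diag_op u y) \<le> onorm (diag_op u) * norm y"
  by (rule norm_le_onorm_if_bounded[OF norm_diag_op_le])

lemma onorm_diag_op_nonneg: "0 \<le> onorm (diag_op u)"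
proof -
  have "0 \<le> onorm (diag_op u) * norm (estar e 0)"
    using norm_diag_op_le_onorm[of u "estar e 0"] norm_ge_zero order_trans by blast
  then show ?thesis using estar_nonzero[of 0] by (simp add: zero_le_mult_iff)
qed

lemma abs_fst_le_onorm_diag_op: "\<bar>fst u\<bar> \<le> onorm (diag_op u)"
proof -
  have "\<bar>fst u + coef e i (snd u)\<bar> \<le> onorm (diag_op u)" for i
    using norm_diag_op_le_onorm[of u "estar e i"] estar_nonzero[of i] by (simp add: diag_op_estar)
  moreover have "(\<lambda>i. \<bar>fst u + coef e i (snd u)\<bar>) \<longlonglongrightarrow> \<bar>fst u\<bar>"
    using tendsto_rabs[OF tendsto_add[OF tendsto_const coef_tendsto_zero]] by simp
  ultimately show ?thesis by (simp add: Lim_bounded)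
qed

text \<open>The functional norming \<open>proj n x\<close> is sent by \<open>D_x\<close> to one that takes the value
  \<open>norm (proj n x)\<close> at \<open>sum_basis n\<close>.\<close>

lemma norm_snd_le_onorm_diag_op: "norm (snd u) \<le> 2 * proj_bound * C1 * onorm (diag_op u)"
proof -
  let ?On = "onorm (diag_op u)"
  have "norm (proj n (snd u)) \<le> 2 * proj_bound * C1 * ?On" for n
  proof -
    obtain y where y: "y \<in> Y" "norm y \<le> proj_bound" "y (proj n (snd u)) = norm (proj n (snd u))"
      using norming_functional[OF proj_proj] by blast
    have "norm (y o\<^sub>L multL (snd u)) = norm (diag_op u y - fst u *\<^sub>R y)"
      using y(1) by (simp add: diag_op_in_Y)
    also have "\<dots> \<le> ?On * norm y + \<bar>fst u\<bar> * norm y"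
      using norm_triangle_ineq4[of "diag_op u y" "fst u *\<^sub>R y"] norm_diag_op_le_onorm[of u y] by simp
    also have "\<dots> \<le> ?On * proj_bound + ?On * proj_bound"
      using abs_fst_le_onorm_diag_op[of u] onorm_diag_op_nonneg[of u] y(2)
      by (intro add_mono mult_mono) auto
    also have "\<dots> = 2 * ?On * proj_bound" by simp
    finally have adj_bound: "norm (y o\<^sub>L multL (snd u)) \<le> 2 * ?On * proj_bound" .
    have "norm (proj n (snd u)) = (y o\<^sub>L multL (snd u)) (sum_basis n)"
      by (simp add: xmul_sum_basis y(3))
    also have "\<dots> \<le> norm (y o\<^sub>L multL (snd u)) * norm (sum_basis n)"
      using norm_blinfun[of "y o\<^sub>L multL (snd u)" "sum_basis n"] by simp
    also have "\<dots> \<le> (2 * ?On * proj_bound) * C1"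
      using adj_bound norm_sum_basis_le[of n]
        onorm_diag_op_nonneg[of u] proj_bound_pos
      by (intro mult_mono) auto
    finally show ?thesis by (simp add: mult_ac)
  qed
  moreover have "(\<lambda>n. norm (proj n (snd u))) \<longlonglongrightarrow> norm (snd u)"
    by (intro tendsto_intros proj_tendsto)
  ultimately show ?thesis by (simp add: Lim_bounded)
qed

lemma unorm_le_onorm_diag_op: "unorm u \<le> (1 + 2 * proj_bound * C1) * onorm (diag_op u)"
  using abs_fst_le_onorm_diag_op[of u] norm_snd_le_onorm_diag_op[of u]
  by (simp add: unorm_def algebra_simps)

subsection \<open>Every compact diagonal operator is some D_x\<close>

lemma
  assumes "T \<in> bops e"
  shows bops_in_Y: "T y \<in> Y"
    and bops_add: "y \<in> Y \<Longrightarrow> z \<in> Y \<Longrightarrow> T (y + z) = T y + T z"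
    and bops_scaleR: "y \<in> Y \<Longrightarrow> T (c *\<^sub>R y) = c *\<^sub>R T y"
    and bops_outside_Y: "y \<notin> Y \<Longrightarrow> T y = 0"
proof -
  show "T y \<in> Y" using assms Y_zero unfolding bops_def by (cases "y \<in> Y") auto
  show "y \<in> Y \<Longrightarrow> z \<in> Y \<Longrightarrow> T (y + z) = T y + T z"
    using assms unfolding bops_def by blast
  show "y \<in> Y \<Longrightarrow> T (c *\<^sub>R y) = c *\<^sub>R T y" using assms unfolding bops_def by blast
  show "y \<notin> Y \<Longrightarrow> T y = 0" using assms unfolding bops_def by blast
qed

lemma bops_diff:
  assumes "T \<in> bops e" "y \<in> Y" "z \<in> Y"
  shows "T (y - z) = T y - T z"
  using bops_add[OF assms(1,2) Y_scaleR[OF assms(3), of "-1"]] bops_scaleR[OF assms(1,3), of "-1"]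
  by simp

lemma bops_sum:
  assumes T: "T \<in> bops e" and "finite I" and "\<And>i. i \<in> I \<Longrightarrow> f i \<in> Y"
  shows "T (\<Sum>i\<in>I. c i *\<^sub>R f i) = (\<Sum>i\<in>I. c i *\<^sub>R T (f i))"
  using \<open>finite I\<close> assms(3)
proof (induction I rule: finite_induct)
  case empty
  then show ?case using bops_scaleR[OF T Y_zero, of 0] by simp
next
  case (insert a I)
  have "c a *\<^sub>R f a \<in> Y" "(\<Sum>i\<in>I. c i *\<^sub>R f i) \<in> Y"
    using insert.prems by (auto intro: Y_scaleR subspace_sum[OF subspace_Y])
  then show ?case using insert bops_add[OF T] bops_scaleR[OF T] by simp
qed

lemma bops_tendsto:
  assumes T: "T \<in> bops e" and f: "\<And>n. f n \<in> Y" "f \<longlonglongrightarrow> y" and y: "y \<in> Y"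
  shows "(\<lambda>n. T (f n)) \<longlonglongrightarrow> T y"
proof -
  obtain B where B: "\<And>y. y \<in> Y \<Longrightarrow> norm (T y) \<le> B * norm y"
    using T unfolding bops_def by blast
  have bound: "\<forall>n. norm (T (f n) - T y) \<le> \<bar>B\<bar> * norm (f n - y)"
  proof
    fix n
    have "norm (T (f n) - T y) = norm (T (f n - y))" using bops_diff[OF T f(1) y] by simp
    also have "\<dots> \<le> B * norm (f n - y)" by (rule B[OF Y_diff[OF f(1) y]])
    also have "\<dots> \<le> \<bar>B\<bar> * norm (f n - y)" by (intro mult_right_mono) auto
    finally show "norm (T (f n) - T y) \<le> \<bar>B\<bar> * norm (f n - y)" .
  qed
  have "(\<lambda>n. \<bar>B\<bar> * norm (f n - y)) \<longlonglongrightarrow> 0"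
    by (intro tendsto_mult_right_zero tendsto_norm_zero LIM_zero f(2))
  then have "(\<lambda>n. T (f n) - T y) \<longlonglongrightarrow> 0"
    by (rule Lim_null_comparison[OF always_eventually[OF bound]])
  then show ?thesis by (rule LIM_zero_cancel)
qed

definition eigenval :: "(('a \<Rightarrow>\<^sub>L real) \<Rightarrow> ('a \<Rightarrow>\<^sub>L real)) \<Rightarrow> nat \<Rightarrow> real" where
  "eigenval T i = T (estar e i) (e i)"

lemma Kdiag_estar:
  assumes "K \<in> Kdiag e"
  shows "K (estar e i) = eigenval K i *\<^sub>R estar e i"
  unfolding eigenval_def
proof (rule Y_single_coordinate)
  show "K (estar e i) \<in> Y" using assms by (simp add: Kdiag_def bops_in_Y)
  show "K (estar e i) (e j) = 0" if "j \<noteq> i" for j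
    using assms that unfolding Kdiag_def ebb_def by auto
qed

lemma Kdiag_comp_projL:
  assumes K: "K \<in> Kdiag e"
  shows "K (y o\<^sub>L projL N) = (\<Sum>i<N. (eigenval K i * y (e i)) *\<^sub>R estar e i)"
proof -
  have "K (y o\<^sub>L projL N) = (\<Sum>i<N. y (e i) *\<^sub>R K (estar e i))"
    unfolding comp_projL_eq using K by (intro bops_sum) (auto simp: Kdiag_def estar_in_Y)
  then show ?thesis by (simp add: Kdiag_estar[OF K] mult.commute)
qed

lemma Kdiag_comp_projL_sum_basis:
  assumes K: "K \<in> Kdiag e" and "n \<le> N"
  shows "K (y o\<^sub>L projL N) (sum_basis n) = y (\<Sum>i<n. eigenval K i *\<^sub>R e i)"
proof -
  have "K (y o\<^sub>L projL N) (sum_basis n)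
      = (\<Sum>i<N. (eigenval K i * y (e i)) * coef e i (sum_basis n))"
    by (simp add: Kdiag_comp_projL[OF K] blinfun.sum_left blinfun.scaleR_left)
  also have "\<dots> = (\<Sum>i<n. (eigenval K i * y (e i)) * coef e i (sum_basis n))"
    using assms(2) by (intro sum.mono_neutral_right) (auto simp: coef_sum_basis)
  also have "\<dots> = (\<Sum>i<n. eigenval K i * y (e i))"
    by (intro sum.cong) (auto simp: coef_sum_basis)
  also have "\<dots> = y (\<Sum>i<n. eigenval K i *\<^sub>R e i)"
    by (simp add: blinfun.sum_right blinfun.scaleR_right)
  finally show ?thesis .
qed

lemma apply_sum_basis_diff_le:
  fixes d :: "'a \<Rightarrow>\<^sub>L real"
  shows "\<bar>d (sum_basis a) - d (sum_basis b)\<bar> \<le> 2 * C1 * norm d"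
proof -
  have bound: "\<bar>d (sum_basis c)\<bar> \<le> C1 * norm d" for c
  proof -
    have "\<bar>d (sum_basis c)\<bar> \<le> norm d * norm (sum_basis c)"
      using norm_blinfun[of d "sum_basis c"] by simp
    also have "\<dots> \<le> norm d * C1" by (intro mult_left_mono norm_sum_basis_le) simp
    finally show ?thesis by (simp add: mult.commute)
  qed
  have "\<bar>d (sum_basis a) - d (sum_basis b)\<bar> \<le> 2 * (C1 * norm d)"
    using bound[of a] bound[of b] abs_triangle_ineq4[of "d (sum_basis a)" "d (sum_basis b)"]
    by linarith
  then show ?thesis by (simp only: mult.assoc)
qed

lemma apply_sum_basis_tail:
  fixes z :: "'a \<Rightarrow>\<^sub>L real"
  assumes "N \<le> a"
  shows "z (sum_basis a) = (z - (z o\<^sub>L projL N)) (sum_basis a) + z (sum_basis N)"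
  using proj_sum_basis[OF assms] by (simp add: blinfun.diff_left)

text \<open>If the partial sums of \<open>\<Sum> l_i e_i\<close> oscillated, the images under \<open>K\<close> of
  normalised functionals norming their differences would oscillate on \<open>sum_basis\<close> as well;
  this is incompatible with their lying near one of finitely many elements of \<open>Y\<close>, which are
  all almost constant on the tail of \<open>sum_basis\<close>.\<close>

lemma Cauchy_eigen_sums:
  assumes K: "K \<in> Kdiag e"
  shows "Cauchy (\<lambda>n. \<Sum>i<n. eigenval K i *\<^sub>R e i)"
proof (rule CauchyI)
  let ?t = "\<lambda>n. \<Sum>i<n. eigenval K i *\<^sub>R e i"
  fix \<epsilon> :: real assume "\<epsilon> > 0"
  define \<eta> where "\<eta> = \<epsilon> / (8 * C1 * proj_bound)"
  have \<eta>: "\<eta> > 0" using \<open>\<epsilon> > 0\<close> C1_pos proj_bound_pos by (simp add: \<eta>_def)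
  define F where "F = closure (K ` (Y \<inter> cball 0 1))"
  have "compact F" using K by (simp add: Kdiag_def F_def)
  then obtain Z where Z: "Z \<subseteq> F" "finite Z" "F \<subseteq> (\<Union>z\<in>Z. ball z \<eta>)"
    by (rule compactE_image[where C=F and f="\<lambda>z. ball z \<eta>"]) (use \<eta> in auto)
  have "F \<subseteq> Y"
    unfolding F_def using K closed_Y by (intro closure_minimal) (auto simp: Kdiag_def bops_in_Y)
  then have "\<forall>z\<in>Z. \<forall>\<^sub>F N in sequentially. dist (z o\<^sub>L projL N) z < \<eta>"
    using Z(1) \<eta> comp_projL_tendsto unfolding tendsto_iff by blast
  then have "\<forall>\<^sub>F N in sequentially. \<forall>z\<in>Z. dist (z o\<^sub>L projL N) z < \<eta>"
    by (rule eventually_ball_finite[OF Z(2)])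
  then obtain N where N: "\<And>z. z \<in> Z \<Longrightarrow> norm (z - (z o\<^sub>L projL N)) < \<eta>"
    unfolding eventually_sequentially by (auto simp: dist_norm norm_minus_commute)
  show "\<exists>M. \<forall>m\<ge>M. \<forall>n\<ge>M. norm (?t m - ?t n) < \<epsilon>"
  proof (intro exI allI impI)
    fix m n assume mN: "N \<le> m" and nN: "N \<le> n"
    define v where "v = ?t m - ?t n"
    define M where "M = max m n"
    have mM: "m \<le> M" and nM: "n \<le> M" by (simp_all add: M_def)
    have "proj M v = v" by (simp add: v_def proj_diff proj_sum mM nM)
    then obtain y where y: "y \<in> Y" "norm y \<le> proj_bound" "y o\<^sub>L projL M = y" "y v = norm v"
      using norming_functional by blast
    define w where "w = (1 / proj_bound) *\<^sub>R y"
    have "norm w = norm y / proj_bound" using proj_bound_pos by (simp add: w_def)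
    then have "norm w \<le> 1" using y(2) proj_bound_pos by (simp add: divide_le_eq)
    then have "w \<in> Y \<inter> cball 0 1" using Y_scaleR[OF y(1)] by (simp add: w_def)
    then have "K w \<in> F"
      unfolding F_def using closure_subset[of "K ` (Y \<inter> cball 0 1)"] by (blast intro: imageI)
    then have "K w \<in> (\<Union>z\<in>Z. ball z \<eta>)" using Z(3) by (rule subsetD[rotated])
    then obtain z where z: "z \<in> Z" "dist z (K w) < \<eta>" by (auto simp only: UN_iff mem_ball)
    have w_projL: "w o\<^sub>L projL M = w"
      using arg_cong[OF y(3), of "\<lambda>T. (1 / proj_bound) *\<^sub>R T"]
      by (simp only: w_def bounded_bilinear.scaleR_left[OF bounded_bilinear_blinfun_compose])
    have "norm v / proj_bound = w (?t m) - w (?t n)"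
      using y(4) by (simp add: w_def v_def blinfun.scaleR_left blinfun.diff_right diff_divide_distrib[symmetric])
    also have "\<dots> = K w (sum_basis m) - K w (sum_basis n)"
      using Kdiag_comp_projL_sum_basis[OF K mM, of w] Kdiag_comp_projL_sum_basis[OF K nM, of w]
      by (simp add: w_projL)
    also have "\<dots> = ((K w - z) (sum_basis m) - (K w - z) (sum_basis n))
        + ((z - (z o\<^sub>L projL N)) (sum_basis m) - (z - (z o\<^sub>L projL N)) (sum_basis n))"
      using apply_sum_basis_tail[OF mN, of z] apply_sum_basis_tail[OF nN, of z]
      by (simp add: blinfun.diff_left)
    also have "\<dots> \<le> 2 * C1 * norm (K w - z) + 2 * C1 * norm (z - (z o\<^sub>L projL N))"
      using apply_sum_basis_diff_le[of "K w - z" m n]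
        apply_sum_basis_diff_le[of "z - (z o\<^sub>L projL N)" m n]
      by linarith
    also have "\<dots> < 2 * C1 * \<eta> + 2 * C1 * \<eta>"
      using z N[OF z(1)] C1_pos
      by (intro add_strict_mono mult_strict_left_mono) (auto simp: dist_norm norm_minus_commute)
    also have "\<dots> = (\<epsilon> / 2) / proj_bound"
      using C1_pos proj_bound_pos by (simp add: \<eta>_def field_simps)
    finally have "norm v / proj_bound < (\<epsilon> / 2) / proj_bound" .
    then have "norm v < \<epsilon> / 2" using proj_bound_pos unfolding divide_less_cancel by blast
    then show "norm (?t m - ?t n) < \<epsilon>" using \<open>\<epsilon> > 0\<close> by (simp add: v_def)
  qed
qed

lemma Kdiag_eq_adj_mult:
  assumes K: "K \<in> Kdiag e" and x: "\<And>i. coef e i x = eigenval K i"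
  shows "K = adj_mult x"
proof
  fix y
  have T: "K \<in> bops e" using K by (simp add: Kdiag_def)
  show "K y = adj_mult x y"
  proof (cases "y \<in> Y")
    case True
    have "K (y o\<^sub>L projL N) = (y o\<^sub>L projL N) o\<^sub>L multL x" for N
      by (rule blinfun_eqI)
        (simp add: Kdiag_comp_projL[OF K] proj_def x blinfun.sum_left blinfun.scaleR_left
          blinfun.sum_right blinfun.scaleR_right mult_ac)
    moreover have "(\<lambda>N. (y o\<^sub>L projL N) o\<^sub>L multL x) \<longlonglongrightarrow> (y o\<^sub>L multL x)"
      by (intro tendsto_intros comp_projL_tendsto[OF True])
    ultimately have "(\<lambda>N. K (y o\<^sub>L projL N)) \<longlonglongrightarrow> (y o\<^sub>L multL x)" by simp
    moreover have "(\<lambda>N. K (y o\<^sub>L projL N)) \<longlonglongrightarrow> K y"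
      using comp_projL_in_Y0 Y0_subset_Y
      by (intro bops_tendsto[OF T _ comp_projL_tendsto[OF True] True]) blast
    ultimately show ?thesis using True LIMSEQ_unique by (simp add: adj_mult_def)
  next
    case False
    then show ?thesis using bops_outside_Y[OF T] by (simp add: adj_mult_def)
  qed
qed

lemma Kdiag_obtains_adj_mult:
  assumes K: "K \<in> Kdiag e"
  obtains x where "K = adj_mult x"
proof -
  obtain x where "(\<lambda>n. \<Sum>i<n. eigenval K i *\<^sub>R e i) \<longlonglongrightarrow> x"
    using Cauchy_eigen_sums[OF K] by (auto simp: Cauchy_convergent_iff convergent_def)
  then have "coef e i x = eigenval K i" for i by (rule coef_unique)
  then show ?thesis using that Kdiag_eq_adj_mult[OF K] by blast
qed

lemma range_diag_op: "range diag_op = diag_alg e"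
proof
  show "range diag_op \<subseteq> diag_alg e" using diag_op_in_diag_alg by blast
  show "diag_alg e \<subseteq> range diag_op"
  proof
    fix T assume "T \<in> diag_alg e"
    then obtain c K where T: "T = (\<lambda>y. c *\<^sub>R idY e y + K y)" and K: "K \<in> Kdiag e"
      unfolding diag_alg_def by blast
    obtain x where "K = adj_mult x" using Kdiag_obtains_adj_mult[OF K] .
    then have "T = diag_op (c, x)" unfolding T diag_op_def by simp
    then show "T \<in> range diag_op" by blast
  qed
qed

lemma bij_diag_op: "bij_betw diag_op UNIV (diag_alg e)"
  unfolding bij_betw_def using inj_diag_op range_diag_op by blast

end

theorem corollary1p3:
  fixes e :: "nat \<Rightarrow> 'a::banach"
  assumes basis: "schauder_basis e"
    and C1: "C1 > 0" "\<forall>n. norm (\<Sum>i<n. e i) \<le> C1"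
    and C2: "C2 > 0" "\<forall>n (a::nat \<Rightarrow> real) b.
        norm (\<Sum>i<n. (a i * b i) *\<^sub>R e i)
          \<le> C2 * norm (\<Sum>i<n. a i *\<^sub>R e i) * norm (\<Sum>i<n. b i *\<^sub>R e i)"
  shows "\<exists>\<Phi>. bij_betw \<Phi> (diag_alg e) (UNIV :: (real \<times> 'a) set)
     \<and> (\<forall>S\<in>diag_alg e. \<forall>T\<in>diag_alg e. \<Phi> (\<lambda>y. S y + T y) = \<Phi> S + \<Phi> T)
     \<and> (\<forall>c. \<forall>T\<in>diag_alg e. \<Phi> (\<lambda>y. c *\<^sub>R T y) = c *\<^sub>R \<Phi> T)
     \<and> (\<forall>S\<in>diag_alg e. \<forall>T\<in>diag_alg e. \<Phi> (S \<circ> T) = umul e (\<Phi> S) (\<Phi> T))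
     \<and> (\<exists>M>0. \<forall>T\<in>diag_alg e. unorm (\<Phi> T) \<le> M * onorm T)
     \<and> (\<exists>M>0. \<forall>T\<in>diag_alg e. onorm T \<le> M * unorm (\<Phi> T))
     \<and> \<Phi> (idY e) = (1, 0)
     \<and> (\<forall>i. \<Phi> (rank1 e i) = (0, e i))"
proof -
  interpret multiplicative_basis e C1 C2
    by unfold_locales (use assms in auto)
  define \<Phi> where "\<Phi> = inv_into UNIV diag_op"
  have \<Phi>_diag_op [simp]: "\<Phi> (diag_op u) = u" for u
    unfolding \<Phi>_def using inj_diag_op by simp
  show ?thesis
    unfolding range_diag_op[symmetric]
  proof (intro exI[of _ \<Phi>] conjI)
    show "bij_betw \<Phi> (range diag_op) UNIV"
      unfolding \<Phi>_def using bij_betw_inv_into[OF bij_diag_op] by (simp add: range_diag_op)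
    show "\<exists>M>0. \<forall>T\<in>range diag_op. unorm (\<Phi> T) \<le> M * onorm T"
      using unorm_le_onorm_diag_op proj_bound_pos C1_pos
      by (intro exI[of _ "1 + 2 * proj_bound * C1"]) (simp add: add_pos_pos)
    show "\<exists>M>0. \<forall>T\<in>range diag_op. onorm T \<le> M * unorm (\<Phi> T)"
      using onorm_diag_op_le by (intro exI[of _ "max 1 C2"]) simp
  qed (simp_all add: diag_op_add diag_op_scaleR diag_op_comp
         diag_op_one[symmetric] diag_op_basis[symmetric])
qed

end
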